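(* Fix $H\in(3/4,1)$, $\mu\in\mathbb{R}$, $\sigma>0$. For $\alpha>0$ let $Q^{\alpha}$ be the law on $\mathcal{C}[0,1]$ of $\alpha Z^H_t+B_t$, $t\in[0,1]$, where $B$ is a standard Brownian motion and $Z^H$ an independent fractional Brownian motion with Hurst parameter $H$, and let $Q_{\mu\alpha/\sigma}$ be the law on $\mathcal{C}[0,1]$ of $W_t-\frac{\mu\alpha}{\sigma}t$, $W$ a standard Brownian motion. For $n\ge1$ let $Y_n(\omega)=(\omega(\tfrac1n)-\omega(0),\dots,\omega(1)-\omega(\tfrac{n-1}n))^T$ and let $Q^{\alpha,n}$, $Q^n_{\mu\alpha/\sigma}$ be the restrictions of $Q^\alpha$, $Q_{\mu\alpha/\sigma}$ to $\sigma(Y_n)$. Then for each $n>1$, $(Q^{\alpha,n})_{\alpha>0}$ is entirely asymptotically separable from $(Q^n_{\mu\alpha/\sigma})_{\alpha>0}$ as $\alpha\to\infty$: there exist $\alpha_k\to\infty$ and sets $A^k\in\sigma(Y_n)$ with $\lim_{k\to\infty}Q^{\alpha_k,n}(A^k)=1$ and $\lim_{k\to\infty}Q^n_{\mu\alpha_k/\sigma}(A^k)=0$.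
   Context: A fractional Brownian motion with Hurst parameter $H$ is a continuous centred Gaussian process with covariance $\frac12(t^{2H}+s^{2H}-|t-s|^{2H})$. *)

theory Defs
  imports "HOL-Probability.Probability"
begin

definition real_gaussian :: "'a measure \<Rightarrow> ('a \<Rightarrow> real) \<Rightarrow> real \<Rightarrow> real \<Rightarrow> bool" where
  "real_gaussian M X m v \<longleftrightarrow>
     X \<in> borel_measurable M \<and>
     ((v = 0 \<and> (AE \<omega> in M. X \<omega> = m)) \<or>
      (v > 0 \<and> distributed M lborel X (normal_density m (sqrt v))))"

definition cont_centred_gaussian_process ::
  "'a measure \<Rightarrow> (real \<Rightarrow> 'a \<Rightarrow> real) \<Rightarrow> (real \<Rightarrow> real \<Rightarrow> real) \<Rightarrow> bool" where
  "cont_centred_gaussian_process M X K \<longleftrightarrow>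
     (\<forall>t\<in>{0..1}. X t \<in> borel_measurable M) \<and>
     (\<forall>\<omega>\<in>space M. continuous_on {0..1} (\<lambda>t. X t \<omega>)) \<and>
     (\<forall>ts a. finite ts \<longrightarrow> ts \<subseteq> {0..1} \<longrightarrow>
        real_gaussian M (\<lambda>\<omega>. \<Sum>t\<in>ts. a t * X t \<omega>) 0
          (\<Sum>s\<in>ts. \<Sum>t\<in>ts. a s * a t * K s t))"

definition brownian_motion :: "'a measure \<Rightarrow> (real \<Rightarrow> 'a \<Rightarrow> real) \<Rightarrow> bool" where
  "brownian_motion M W \<longleftrightarrow> cont_centred_gaussian_process M W (\<lambda>s t. min s t)"

definition fbm_cov :: "real \<Rightarrow> real \<Rightarrow> real \<Rightarrow> real" where
  "fbm_cov H s t = (t powr (2*H) + s powr (2*H) - \<bar>t - s\<bar> powr (2*H)) / 2"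

definition fractional_brownian_motion :: "'a measure \<Rightarrow> real \<Rightarrow> (real \<Rightarrow> 'a \<Rightarrow> real) \<Rightarrow> bool" where
  "fractional_brownian_motion M H Z \<longleftrightarrow> cont_centred_gaussian_process M Z (fbm_cov H)"

definition path01 :: "(real \<Rightarrow> 'a \<Rightarrow> real) \<Rightarrow> 'a \<Rightarrow> real \<Rightarrow> real" where
  "path01 X \<omega> = (\<lambda>t\<in>{0..1}. X t \<omega>)"

definition Yinc :: "nat \<Rightarrow> (real \<Rightarrow> real) \<Rightarrow> nat \<Rightarrow> real" where
  "Yinc n f = (\<lambda>i\<in>{..<n}. f (real (Suc i) / real n) - f (real i / real n))"

end

theory Submission imports Defs begin

text \<open>The second difference f(2h) - 2 f(h) + f(0) of the first two increments
  annihilates the linear drift, so under the drifted Brownian laws it has a distribution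
  independent of \<alpha>. Under the mixed laws it equals \<alpha> X + G, where X, the second difference
  of the fractional Brownian motion, is centred Gaussian with variance
  h^(2H) (4 - 2^(2H)) > 0 because H < 1; so X has no atom at 0. With \<alpha> = r^2 the events
  {|second difference| > r} separate the two families as r \<rightarrow> \<infinity>.\<close>

definition second_diff :: "real \<Rightarrow> (real \<Rightarrow> real) \<Rightarrow> real" where
  "second_diff h f = f (2 * h) - 2 * f h + f 0"

definition second_diff_weight :: "real \<Rightarrow> real \<Rightarrow> real" where
  "second_diff_weight h t = (if t = h then -2 else 1)"

lemma second_diff_minus_linear: "second_diff h (\<lambda>t. f t - c * t) = second_diff h f"
  by (simp add: second_diff_def algebra_simps)

lemma second_diff_eq_weighted_sum:
  assumes "h \<noteq> 0"
  shows "second_diff h f = (\<Sum>t\<in>{0, h, 2 * h}. second_diff_weight h t * f t)"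
  using assms by (simp add: second_diff_def second_diff_weight_def)

lemma Yinc_diff_eq_second_diff:
  assumes "1 < n"
  shows "Yinc n f 1 - Yinc n f 0 = second_diff (1 / real n) f"
  using assms by (simp add: Yinc_def second_diff_def)

lemma Yinc_in_space_PiM: "Yinc n f \<in> space (PiM {..<n} (\<lambda>_. borel))"
  by (simp add: space_PiM Yinc_def)

lemma sets_PiM_abs_component_diff_gt:
  assumes "i \<in> I" "j \<in> I"
  shows "{y \<in> space (PiM I (\<lambda>_. borel)). c < \<bar>y i - y j\<bar>}
           \<in> sets (PiM I (\<lambda>_. borel :: real measure))"
proof -
  have [measurable]: "(\<lambda>y. y i) \<in> borel_measurable (PiM I (\<lambda>_. borel :: real measure))"
    "(\<lambda>y. y j) \<in> borel_measurable (PiM I (\<lambda>_. borel :: real measure))"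
    using assms by (auto intro: measurable_component_singleton)
  show ?thesis by measurable
qed

lemma cont_centred_gaussian_process_second_diff:
  assumes "cont_centred_gaussian_process M X K" "0 < h" "2 * h \<le> 1"
  shows "real_gaussian M (\<lambda>\<omega>. second_diff h (\<lambda>t. X t \<omega>)) 0
           (\<Sum>s\<in>{0, h, 2 * h}. \<Sum>t\<in>{0, h, 2 * h}.
              second_diff_weight h s * second_diff_weight h t * K s t)"
proof -
  have "(\<lambda>\<omega>. second_diff h (\<lambda>t. X t \<omega>)) =
        (\<lambda>\<omega>. \<Sum>t\<in>{0, h, 2 * h}. second_diff_weight h t * X t \<omega>)"
    using assms by (intro ext second_diff_eq_weighted_sum) simp
  moreover have "{0, h, 2 * h} \<subseteq> {0..1}"
    using assms by auto
  then have "real_gaussian M (\<lambda>\<omega>. \<Sum>t\<in>{0, h, 2 * h}. second_diff_weight h t * X t \<omega>) 0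
      (\<Sum>s\<in>{0, h, 2 * h}. \<Sum>t\<in>{0, h, 2 * h}.
         second_diff_weight h s * second_diff_weight h t * K s t)"
    using assms(1) unfolding cont_centred_gaussian_process_def
    by (elim conjE allE[of _ "{0, h, 2 * h}"] allE[of _ "second_diff_weight h"]) blast
  ultimately show ?thesis by simp
qed

lemma cont_centred_gaussian_process_second_diff_measurable:
  assumes "cont_centred_gaussian_process M X K" "0 < h" "2 * h \<le> 1"
  shows "(\<lambda>\<omega>. second_diff h (\<lambda>t. X t \<omega>)) \<in> borel_measurable M"
  using cont_centred_gaussian_process_second_diff[OF assms] by (simp add: real_gaussian_def)

lemma real_gaussian_prob_eq_zero:
  assumes "real_gaussian M X m v" "v \<noteq> 0"
  shows "measure M {\<omega>\<in>space M. X \<omega> = c} = 0"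
proof -
  from assms have "distributed M lborel X (normal_density m (sqrt v))"
    unfolding real_gaussian_def by auto
  then have "emeasure M (X -` {c} \<inter> space M) =
      (\<integral>\<^sup>+x. ennreal (normal_density m (sqrt v) x) * indicator {c} x \<partial>lborel)"
    by (rule distributed_emeasure) simp
  also have "\<dots> = 0"
    by (rule nn_integral_null_set) (simp add: countable_imp_null_set_lborel)
  finally show ?thesis
    by (simp add: measure_def vimage_def Int_def conj_commute)
qed

lemma fbm_cov_second_diff_variance:
  assumes "0 < h"
  shows "(\<Sum>s\<in>{0, h, 2 * h}. \<Sum>t\<in>{0, h, 2 * h}.
            second_diff_weight h s * second_diff_weight h t * fbm_cov H s t)
         = h powr (2 * H) * (4 - 2 powr (2 * H))"
proof -
  have "(2 * h) powr (2 * H) = 2 powr (2 * H) * h powr (2 * H)"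
    using assms by (simp add: powr_mult)
  then show ?thesis
    using assms by (simp add: second_diff_weight_def fbm_cov_def algebra_simps)
qed

lemma fbm_second_diff_prob_eq_zero:
  assumes "fractional_brownian_motion M H Z" "0 < H" "H < 1" "0 < h" "2 * h \<le> 1"
  shows "measure M {\<omega>\<in>space M. second_diff h (\<lambda>t. Z t \<omega>) = 0} = 0"
proof (rule real_gaussian_prob_eq_zero)
  have "real_gaussian M (\<lambda>\<omega>. second_diff h (\<lambda>t. Z t \<omega>)) 0
          (\<Sum>s\<in>{0, h, 2 * h}. \<Sum>t\<in>{0, h, 2 * h}.
             second_diff_weight h s * second_diff_weight h t * fbm_cov H s t)"
    using assms by (intro cont_centred_gaussian_process_second_diff)
      (simp_all add: fractional_brownian_motion_def)
  then show "real_gaussian M (\<lambda>\<omega>. second_diff h (\<lambda>t. Z t \<omega>)) 0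
               (h powr (2 * H) * (4 - 2 powr (2 * H)))"
    by (simp only: fbm_cov_second_diff_variance[OF \<open>0 < h\<close>])
  have "2 powr (2 * H) < 2 powr 2"
    using assms by (intro powr_less_mono) auto
  then show "h powr (2 * H) * (4 - 2 powr (2 * H)) \<noteq> 0"
    using assms by simp
qed

lemma prob_abs_gt_tendsto_zero:
  assumes "prob_space M" and [measurable]: "G \<in> borel_measurable M"
  shows "(\<lambda>k. measure M {\<omega>\<in>space M. real (Suc k) < \<bar>G \<omega>\<bar>}) \<longlonglongrightarrow> 0"
proof -
  interpret prob_space M by fact
  have "(\<lambda>k. measure M {\<omega>\<in>space M. real (Suc k) < \<bar>G \<omega>\<bar>}) \<longlonglongrightarrow>
        measure M (\<Inter>k. {\<omega>\<in>space M. real (Suc k) < \<bar>G \<omega>\<bar>})"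
    by (rule finite_Lim_measure_decseq) (auto simp: decseq_def)
  moreover have "(\<Inter>k. {\<omega>\<in>space M. real (Suc k) < \<bar>G \<omega>\<bar>}) = {}"
  proof -
    have "\<exists>k. \<not> real (Suc k) < \<bar>G \<omega>\<bar>" for \<omega>
    proof -
      obtain k where "\<bar>G \<omega>\<bar> < real k"
        using reals_Archimedean2 by blast
      then show ?thesis by (intro exI[of _ k]) simp
    qed
    then show ?thesis by blast
  qed
  ultimately show ?thesis by simp
qed

lemma prob_abs_le_tendsto_zero:
  assumes "prob_space M" and [measurable]: "X \<in> borel_measurable M" and "0 \<le> c"
    and "measure M {\<omega>\<in>space M. X \<omega> = 0} = 0"
  shows "(\<lambda>k. measure M {\<omega>\<in>space M. \<bar>X \<omega>\<bar> \<le> c / real (Suc k)}) \<longlonglongrightarrow> 0"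
proof -
  interpret prob_space M by fact
  have "decseq (\<lambda>k. {\<omega>\<in>space M. \<bar>X \<omega>\<bar> \<le> c / real (Suc k)})"
    using \<open>0 \<le> c\<close> unfolding decseq_def
    by (auto intro: order_trans[OF _ divide_left_mono])
  then have "(\<lambda>k. measure M {\<omega>\<in>space M. \<bar>X \<omega>\<bar> \<le> c / real (Suc k)}) \<longlonglongrightarrow>
        measure M (\<Inter>k. {\<omega>\<in>space M. \<bar>X \<omega>\<bar> \<le> c / real (Suc k)})"
    by (intro finite_Lim_measure_decseq) auto
  moreover have "(\<Inter>k. {\<omega>\<in>space M. \<bar>X \<omega>\<bar> \<le> c / real (Suc k)}) = {\<omega>\<in>space M. X \<omega> = 0}"
  proof (intro equalityI subsetI)
    fix \<omega> assume \<omega>: "\<omega> \<in> (\<Inter>k. {\<omega>\<in>space M. \<bar>X \<omega>\<bar> \<le> c / real (Suc k)})"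
    have "(\<lambda>k. c / real (Suc k)) \<longlonglongrightarrow> 0"
      by (rule LIMSEQ_Suc[OF lim_const_over_n])
    then have "\<bar>X \<omega>\<bar> \<le> 0"
      using \<omega> by (intro tendsto_lowerbound[of "\<lambda>k. c / real (Suc k)"]) auto
    then show "\<omega> \<in> {\<omega>\<in>space M. X \<omega> = 0}" using \<omega> by auto
  qed (use \<open>0 \<le> c\<close> in auto)
  ultimately show ?thesis using assms(4) by simp
qed

lemma abs_scaled_add_gt:
  fixes r x g :: real
  assumes "0 < r" "2 / r < \<bar>x\<bar>" "\<bar>g\<bar> \<le> r"
  shows "r < \<bar>r\<^sup>2 * x + g\<bar>"
proof -
  have "2 < r * \<bar>x\<bar>"
    using assms by (simp add: field_simps)
  then have "2 * r < \<bar>r\<^sup>2 * x\<bar>"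
    using \<open>0 < r\<close> by (simp add: abs_mult power2_eq_square algebra_simps)
  with assms(3) show ?thesis by linarith
qed

lemma prob_abs_scaled_add_gt_tendsto_one:
  assumes "prob_space M" and [measurable]: "X \<in> borel_measurable M" "G \<in> borel_measurable M"
    and "measure M {\<omega>\<in>space M. X \<omega> = 0} = 0"
  shows "(\<lambda>k. measure M {\<omega>\<in>space M. real (Suc k) < \<bar>(real (Suc k))\<^sup>2 * X \<omega> + G \<omega>\<bar>})
           \<longlonglongrightarrow> 1"
proof -
  interpret prob_space M by fact
  define small where "small k = {\<omega>\<in>space M. \<bar>X \<omega>\<bar> \<le> 2 / real (Suc k)}" for k
  define large where "large k = {\<omega>\<in>space M. real (Suc k) < \<bar>G \<omega>\<bar>}" for k
  have [measurable]: "small k \<in> sets M" "large k \<in> sets M" for k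
    unfolding small_def large_def by measurable
  have lower_tendsto: "(\<lambda>k. 1 - (prob (small k) + prob (large k))) \<longlonglongrightarrow> 1 - (0 + 0)"
    unfolding small_def large_def using assms
    by (intro tendsto_intros prob_abs_le_tendsto_zero prob_abs_gt_tendsto_zero) auto
  have lower_bound: "1 - (prob (small k) + prob (large k)) \<le>
      prob {\<omega>\<in>space M. real (Suc k) < \<bar>(real (Suc k))\<^sup>2 * X \<omega> + G \<omega>\<bar>}" for k
  proof -
    have "1 - (prob (small k) + prob (large k)) \<le> prob (space M - (small k \<union> large k))"
      using measure_Un_le[of "small k" M "large k"] by (simp add: prob_compl)
    also have "\<dots> \<le> prob {\<omega>\<in>space M. real (Suc k) < \<bar>(real (Suc k))\<^sup>2 * X \<omega> + G \<omega>\<bar>}"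
      by (intro finite_measure_mono subsetI)
        (auto simp: small_def large_def not_le not_less intro!: abs_scaled_add_gt)
    finally show ?thesis .
  qed
  show ?thesis
    by (rule tendsto_sandwich[OF _ _ lower_tendsto[simplified] tendsto_const])
      (intro always_eventually allI lower_bound prob_le_1)+
qed

theorem lemma3p9:
  fixes M :: "'a measure" and N :: "'b measure"
    and Z B :: "real \<Rightarrow> 'a \<Rightarrow> real" and W :: "real \<Rightarrow> 'b \<Rightarrow> real"
    and H \<mu> \<sigma> :: real and n :: nat
  assumes "3/4 < H" "H < 1" "\<sigma> > 0"
    and "prob_space M" "prob_space N"
    and "fractional_brownian_motion M H Z"
    and "brownian_motion M B"
    and "prob_space.indep_var M (PiM {0..1} (\<lambda>_. borel)) (path01 Z)
                                (PiM {0..1} (\<lambda>_. borel)) (path01 B)"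
    and "brownian_motion N W"
    and "n > 1"
  shows "\<exists>\<alpha> :: nat \<Rightarrow> real. (\<forall>k. \<alpha> k > 0) \<and> filterlim \<alpha> at_top sequentially \<and>
          (\<exists>C :: nat \<Rightarrow> (nat \<Rightarrow> real) set.
             (\<forall>k. C k \<in> sets (PiM {..<n} (\<lambda>_. borel))) \<and>
             (\<lambda>k. measure M {\<omega> \<in> space M. Yinc n (\<lambda>t. \<alpha> k * Z t \<omega> + B t \<omega>) \<in> C k})
                \<longlonglongrightarrow> 1 \<and>
             (\<lambda>k. measure N {\<omega> \<in> space N. Yinc n (\<lambda>t. W t \<omega> - \<mu> * \<alpha> k / \<sigma> * t) \<in> C k})
                \<longlonglongrightarrow> 0)"
proof -
  define h where "h = 1 / real n"
  have h: "0 < h" "2 * h \<le> 1"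
    using \<open>n > 1\<close> by (auto simp: h_def field_simps)
  define \<alpha> where "\<alpha> k = (real (Suc k))\<^sup>2" for k
  define C where "C k = {y \<in> space (PiM {..<n} (\<lambda>_. borel)). real (Suc k) < \<bar>y 1 - y 0\<bar>}" for k
  have C_sets: "C k \<in> sets (PiM {..<n} (\<lambda>_. borel))" for k
    unfolding C_def using \<open>n > 1\<close> by (intro sets_PiM_abs_component_diff_gt) auto
  have Yinc_in_C: "Yinc n f \<in> C k \<longleftrightarrow> real (Suc k) < \<bar>second_diff h f\<bar>" for f k
    using Yinc_diff_eq_second_diff[OF \<open>n > 1\<close>, of f] by (simp add: C_def Yinc_in_space_PiM h_def)
  have \<alpha>_at_top: "filterlim \<alpha> at_top sequentially"
    unfolding \<alpha>_def
    by (intro filterlim_pow_at_top filterlim_compose[OF filterlim_real_sequentially filterlim_Suc]) auto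
  have mixed: "(\<lambda>k. measure M {\<omega>\<in>space M. real (Suc k) <
          \<bar>\<alpha> k * second_diff h (\<lambda>t. Z t \<omega>) + second_diff h (\<lambda>t. B t \<omega>)\<bar>}) \<longlonglongrightarrow> 1"
    unfolding \<alpha>_def using assms h
    by (intro prob_abs_scaled_add_gt_tendsto_one fbm_second_diff_prob_eq_zero
        cont_centred_gaussian_process_second_diff_measurable)
      (auto simp: fractional_brownian_motion_def brownian_motion_def)
  have drifted: "(\<lambda>k. measure N {\<omega>\<in>space N. real (Suc k) < \<bar>second_diff h (\<lambda>t. W t \<omega>)\<bar>})
                  \<longlonglongrightarrow> 0"
    using assms h
    by (intro prob_abs_gt_tendsto_zero cont_centred_gaussian_process_second_diff_measurable)
      (auto simp: brownian_motion_def)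
  have second_diff_mixed: "second_diff h (\<lambda>t. \<alpha> k * Z t \<omega> + B t \<omega>) =
      \<alpha> k * second_diff h (\<lambda>t. Z t \<omega>) + second_diff h (\<lambda>t. B t \<omega>)" for k \<omega>
    by (simp add: second_diff_def algebra_simps)
  show ?thesis
    by (intro exI[of _ \<alpha>] exI[of _ C] conjI allI C_sets \<alpha>_at_top)
      (simp_all only: Yinc_in_C second_diff_mixed second_diff_minus_linear mixed drifted,
       simp add: \<alpha>_def)
qed

end
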